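(* Let $X$ be a unital commutative semiring. The following are equivalent: (1) the relation $\sim$ on $\mathcal{S}(X)$ is a congruence and the quotient semiring $\tilde{\mathcal{S}}(X)=\mathcal{S}(X)/\sim$ is upper-bound; (2) $X$ is idempotent, linearly ordered by its intrinsic order, and for all $a,b,x\in X$ with $a<b$ one has $ax=0$ or $ax<bx$.
   Context: A semiring $(X,+,0,\cdot)$: $(X,+,0)$ commutative monoid, $(X,\cdot)$ semigroup, distributivity, $0$ absorbing. Idempotent: $x+x=x$. Intrinsic order: $a\le b$ iff $a+x=b$ for some $x$; $a<b$ means $a\le b$, $a\ne b$; a semiring is upper-bound if its intrinsic order is antisymmetric. $\mathcal{S}(X)=X\times X$ with $(a',a'')+(b',b'')=(a'+b',a''+b'')$ and $(a',a'')(b',b'')=(a'b'+a''b'',a'b''+a''b')$. The relation $\sim$: $(a',a'')\sim(b',b'')$ iff $(a',a'')=(b',b'')$, or ($a'\ne a''$, $b'\ne b''$ and $a'+b''=a''+b'$). A congruence is an equivalence relation respecting addition and multiplication. *)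

theory Defs
  imports Main
begin

definition intr_le :: "'a::plus \<Rightarrow> 'a \<Rightarrow> bool" where
  "intr_le a b \<longleftrightarrow> (\<exists>x. a + x = b)"

definition intr_less :: "'a::plus \<Rightarrow> 'a \<Rightarrow> bool" where
  "intr_less a b \<longleftrightarrow> intr_le a b \<and> a \<noteq> b"

definition idempotent_add :: "'a::plus itself \<Rightarrow> bool" where
  "idempotent_add _ \<longleftrightarrow> (\<forall>x::'a. x + x = x)"

text \<open>Linearly ordered by the intrinsic order (reflexivity/transitivity are automatic).\<close>
definition intr_linear :: "'a::plus itself \<Rightarrow> bool" where
  "intr_linear _ \<longleftrightarrow>
     (\<forall>a b::'a. intr_le a b \<and> intr_le b a \<longrightarrow> a = b) \<and>
     (\<forall>a b::'a. intr_le a b \<or> intr_le b a)"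

definition s_add :: "'a::plus \<times> 'a \<Rightarrow> 'a \<times> 'a \<Rightarrow> 'a \<times> 'a" where
  "s_add p q = (fst p + fst q, snd p + snd q)"

definition s_mul :: "'a::{plus,times} \<times> 'a \<Rightarrow> 'a \<times> 'a \<Rightarrow> 'a \<times> 'a" where
  "s_mul p q = (fst p * fst q + snd p * snd q, fst p * snd q + snd p * fst q)"

definition sim_rel :: "('a::plus \<times> 'a) rel" where
  "sim_rel = {(p, q). p = q \<or>
      (fst p \<noteq> snd p \<and> fst q \<noteq> snd q \<and> fst p + snd q = snd p + fst q)}"

definition s_congruence :: "('a::{plus,times} \<times> 'a) rel \<Rightarrow> bool" where
  "s_congruence R \<longleftrightarrow> equiv UNIV R \<and>
     (\<forall>p q p' q'. (p, q) \<in> R \<and> (p', q') \<in> R \<longrightarrow>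
        (s_add p p', s_add q q') \<in> R \<and> (s_mul p p', s_mul q q') \<in> R)"

text \<open>Intrinsic order on the quotient S(X)/R, on equivalence classes:
  [p] \<le> [q] iff [p] + [x] = [q] for some class [x], where [p]+[x] = [p+x].\<close>
definition quot_le :: "('a::plus \<times> 'a) rel \<Rightarrow> 'a \<times> 'a \<Rightarrow> 'a \<times> 'a \<Rightarrow> bool" where
  "quot_le R p q \<longleftrightarrow> (\<exists>x. R `` {s_add p x} = R `` {q})"

definition quot_upper_bound :: "('a::plus \<times> 'a) rel \<Rightarrow> bool" where
  "quot_upper_bound R \<longleftrightarrow>
     (\<forall>p q. quot_le R p q \<and> quot_le R q p \<longrightarrow> R `` {p} = R `` {q})"

end

theory Submission
  imports Defs
begin

text \<open>
  If \<sim> is a congruence, three pairs of \<sim>-related elements force (2): adding \<open>(0, x)\<close> to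
  \<open>(x, 0) \<sim> (x + x, x)\<close> and \<open>(b, 0)\<close> to \<open>(a + b, b) \<sim> (a, a + b)\<close> gives idempotence and
  linearity, and multiplying \<open>(b, 0) \<sim> (b, a)\<close> by \<open>(x, 0)\<close> gives the strictness condition;
  in each case a pair ends up \<sim>-related to a different diagonal pair, which \<sim> forbids.

  Conversely, under (2) the sum \<open>a + b\<close> is the maximum of \<open>a\<close> and \<open>b\<close>, and every
  off-diagonal pair is \<sim>-equivalent to the pair that keeps only its larger coordinate.
  This normal form turns \<sim> into a kernel, and it is compatible with addition and (by the
  strictness condition) with multiplication, so \<sim> is a congruence.  The total \<open>a + b\<close> of a
  pair is additive and invariant under \<sim>; if \<open>[p] \<le> [q] \<le> [p]\<close> then \<open>p\<close> and \<open>q\<close> have the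
  same total \<open>t\<close>, and adding to \<open>p\<close> a pair of smaller total either keeps its class or
  collapses it to \<open>(t, t)\<close>, which forces \<open>[p] = [q]\<close>.
\<close>

lemma sim_rel_refl: "(p, p) \<in> sim_rel"
  by (simp add: sim_rel_def)

lemma sim_rel_diagonal_iff: "(q, (a, a)) \<in> sim_rel \<longleftrightarrow> q = (a, a)"
  by (auto simp: sim_rel_def)

lemma intr_le_iff_add_eq:
  fixes a b :: "'a::semigroup_add"
  assumes "\<And>x::'a. x + x = x"
  shows "intr_le a b \<longleftrightarrow> a + b = b"
  unfolding intr_le_def by (metis add.assoc assms)

lemma add_eq_right_imp_mult:
  fixes a b c :: "'a::semiring"
  shows "a + b = b \<Longrightarrow> a * c + b * c = b * c"
  by (metis distrib_right)

lemma intr_conditions_iff: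
  fixes T :: "'a::comm_semiring_0 itself"
  shows "(idempotent_add T \<and> intr_linear T \<and>
            (\<forall>a b x :: 'a. intr_less a b \<longrightarrow> a * x = 0 \<or> intr_less (a * x) (b * x)))
     \<longleftrightarrow> (\<forall>x::'a. x + x = x) \<and> (\<forall>a b::'a. a + b = a \<or> a + b = b) \<and>
          (\<forall>a b x::'a. a + b = b \<longrightarrow> a \<noteq> b \<longrightarrow> a * x = 0 \<or> a * x \<noteq> b * x)"
proof (cases "\<forall>x::'a. x + x = x")
  case True
  then have le: "intr_le a b \<longleftrightarrow> a + b = b" for a b :: 'a
    by (intro intr_le_iff_add_eq) auto
  have linear: "intr_linear T \<longleftrightarrow> (\<forall>a b::'a. a + b = a \<or> a + b = b)"
    unfolding intr_linear_def le by (metis add.commute)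
  have less: "intr_less a b \<longleftrightarrow> a + b = b \<and> a \<noteq> b" for a b :: 'a
    by (simp add: intr_less_def le)
  have strict: "(\<forall>a b x :: 'a. intr_less a b \<longrightarrow> a * x = 0 \<or> intr_less (a * x) (b * x))
      \<longleftrightarrow> (\<forall>a b x::'a. a + b = b \<longrightarrow> a \<noteq> b \<longrightarrow> a * x = 0 \<or> a * x \<noteq> b * x)"
    unfolding less using add_eq_right_imp_mult by metis
  show ?thesis
    using True unfolding linear strict idempotent_add_def by blast
qed (auto simp: idempotent_add_def)

context
  assumes sim_congruence: "s_congruence (sim_rel :: ('a::comm_semiring_0 \<times> 'a) rel)"
begin

lemma sim_rel_add_compat:
  "(p, q) \<in> sim_rel \<Longrightarrow> (p', q') \<in> sim_rel \<Longrightarrow> (s_add p p', s_add q q') \<in> (sim_rel :: ('a \<times> 'a) rel)"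
  using sim_congruence unfolding s_congruence_def by blast

lemma sim_rel_mul_compat:
  "(p, q) \<in> sim_rel \<Longrightarrow> (p', q') \<in> sim_rel \<Longrightarrow> (s_mul p p', s_mul q q') \<in> (sim_rel :: ('a \<times> 'a) rel)"
  using sim_congruence unfolding s_congruence_def by blast

lemma sim_congruence_add_idem: "x + x = (x :: 'a)"
proof (rule ccontr)
  assume ne: "x + x \<noteq> x"
  then have "((x, 0), (x + x, x)) \<in> sim_rel"
    by (auto simp: sim_rel_def add.commute)
  from sim_rel_add_compat[OF this sim_rel_refl[of "(0, x)"]]
  have "((x, x), (x + x, x + x)) \<in> sim_rel"
    by (simp add: s_add_def)
  with ne show False
    by (simp add: sim_rel_diagonal_iff)
qed

lemma sim_congruence_add_linear: "a + b = a \<or> a + b = (b :: 'a)"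
proof (rule ccontr)
  assume ne: "\<not> (a + b = a \<or> a + b = b)"
  have "((a + b, b), (a, a + b)) \<in> sim_rel"
    using ne by (auto simp: sim_rel_def sim_congruence_add_idem add.commute)
  from sim_rel_add_compat[OF this sim_rel_refl[of "(b, 0)"]]
  have "((a + b, b), (a + b, a + b)) \<in> sim_rel"
    by (simp add: s_add_def add.assoc sim_congruence_add_idem)
  with ne show False
    by (simp add: sim_rel_diagonal_iff)
qed

lemma sim_congruence_mult_strict:
  fixes a b x :: 'a
  assumes "a + b = b" "a \<noteq> b"
  shows "a * x = 0 \<or> a * x \<noteq> b * x"
proof (rule ccontr)
  assume "\<not> (a * x = 0 \<or> a * x \<noteq> b * x)"
  then have ax: "a * x \<noteq> 0" "a * x = b * x" by auto
  have "((b, 0), (b, a)) \<in> sim_rel"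
    using assms by (auto simp: sim_rel_def add.commute)
  from sim_rel_mul_compat[OF this sim_rel_refl[of "(x, 0)"]]
  have "((b * x, 0), (b * x, b * x)) \<in> sim_rel"
    using ax by (simp add: s_mul_def)
  with ax show False
    by (simp add: sim_rel_diagonal_iff)
qed

end

text \<open>
  Off-diagonal pairs keep only their dominant coordinate; the last branch is correct only
  when \<open>+\<close> is linear.  In lemma names, \<open>pos\<close> refers to pairs \<open>(a, b)\<close> with
  \<open>b + a = a \<noteq> b\<close>.
\<close>

definition sim_normal :: "'a::{plus,zero} \<times> 'a \<Rightarrow> 'a \<times> 'a" where
  "sim_normal p =
     (if fst p = snd p then p else if snd p + fst p = fst p then (fst p, 0) else (0, snd p))"

definition s_total :: "'a::plus \<times> 'a \<Rightarrow> 'a" where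
  "s_total p = fst p + snd p"

lemma s_total_s_add: "s_total (s_add p q) = s_total p + s_total (q :: 'a::ab_semigroup_add \<times> 'a)"
  by (simp add: s_total_def s_add_def add_ac)

lemma s_mul_swap_left:
  "s_mul (prod.swap p) q = prod.swap (s_mul p (q :: 'a::{ab_semigroup_add,times} \<times> 'a))"
  by (simp add: s_mul_def add.commute)

lemma s_mul_swap_right: "s_mul p (prod.swap q) = prod.swap (s_mul p q)"
  by (simp add: s_mul_def)

lemma s_add_swap: "s_add (prod.swap p) (prod.swap q) = prod.swap (s_add p q)"
  by (simp add: s_add_def)

lemma s_add_commute: "s_add p q = s_add q (p :: 'a::ab_semigroup_add \<times> 'a)"
  by (simp add: s_add_def add.commute)

lemma s_mul_commute: "s_mul p q = s_mul q (p :: 'a::comm_semiring \<times> 'a)"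
  by (simp add: s_mul_def add.commute mult.commute)

context
  assumes add_idem: "\<And>x::'a::comm_semiring_0. x + x = x"
    and add_linear: "\<And>a b::'a. a + b = a \<or> a + b = b"
    and mult_strict: "\<And>a b x::'a. a + b = b \<Longrightarrow> a \<noteq> b \<Longrightarrow> a * x = 0 \<or> a * x \<noteq> b * x"
begin

lemma sim_normal_swap: "sim_normal (prod.swap p) = prod.swap (sim_normal (p :: 'a \<times> 'a))"
  using add_linear[of "fst p" "snd p"]
  by (auto simp: sim_normal_def add.commute)

lemma s_total_sim_normal: "s_total (sim_normal p) = s_total (p :: 'a \<times> 'a)"
  using add_linear[of "fst p" "snd p"]
  by (auto simp: sim_normal_def s_total_def add.commute)

lemma sim_rel_iff_sim_normal: "(p, q) \<in> sim_rel \<longleftrightarrow> sim_normal p = sim_normal (q :: 'a \<times> 'a)"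
  using add_linear[of "fst p" "snd p"] add_linear[of "fst q" "snd q"]
    add_linear[of "fst p" "snd q"] add_linear[of "snd p" "fst q"]
  unfolding sim_rel_def sim_normal_def
  by (smt (verit) add_idem add.assoc add.commute add_0 prod_eq_iff fst_conv snd_conv case_prod_conv mem_Collect_eq)

lemma sim_normal_pos_eq:
  assumes "b + a = a" "a \<noteq> b"
  shows "sim_normal (a, b) = (a, 0 :: 'a)"
  using assms by (simp add: sim_normal_def)

lemma sim_normal_add_dominated:
  assumes "b + a = a" "a \<noteq> b"
  shows "sim_normal (a + c, b + d) = sim_normal (a + c, d :: 'a)"
proof (cases "b + d = d")
  case False
  then have bd: "b + d = b" "d + b = b" "d \<noteq> b"
    using add_linear[of b d] by (auto simp: add.commute)
  have b_le: "b + (a + c) = a + c"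
    using assms(1) by (simp add: add.assoc[symmetric])
  have "a + (a + c) = a + c"
    by (simp add: add.assoc[symmetric] add_idem)
  then have b_ne: "a + c \<noteq> b"
    using assms by (metis add.commute)
  have d_le: "d + (a + c) = a + c"
    using b_le bd(2) by (metis add.assoc)
  have d_ne: "a + c \<noteq> d"
    using False b_le by auto
  show ?thesis
    using bd b_le b_ne d_le d_ne by (simp add: sim_normal_pos_eq)
qed simp

lemma off_diagonal_cases:
  fixes a b :: 'a
  assumes "a \<noteq> b"
  obtains "b + a = a" | "a + b = b"
  using add_linear[of a b] by (auto simp: add.commute)

lemma sim_normal_add_pos:
  fixes a b :: 'a
  assumes "b + a = a" "a \<noteq> b"
  shows "sim_normal (s_add (a, b) r) = sim_normal (s_add (sim_normal (a, b)) r)"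
  by (simp add: s_add_def sim_normal_pos_eq[OF assms] sim_normal_add_dominated[OF assms])

lemma sim_normal_add: "sim_normal (s_add p r) = sim_normal (s_add (sim_normal p) (r :: 'a \<times> 'a))"
proof -
  obtain a b where p: "p = (a, b)" by fastforce
  show ?thesis
  proof (cases "a = b")
    case False
    then show ?thesis
    proof (cases rule: off_diagonal_cases)
      case 1
      then show ?thesis using False p by (simp add: sim_normal_add_pos)
    next
      case 2
      then have "sim_normal (s_add (b, a) (prod.swap r)) =
          sim_normal (s_add (sim_normal (b, a)) (prod.swap r))"
        using False by (intro sim_normal_add_pos) auto
      then have "prod.swap (sim_normal (s_add p r)) = prod.swap (sim_normal (s_add (sim_normal p) r))"
        using p by (simp add: s_add_swap[symmetric] sim_normal_swap[symmetric])
      then show ?thesis by (simp add: inj_eq)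
    qed
  qed (simp add: p sim_normal_def)
qed

lemma sim_normal_mul_pos_pos:
  fixes a b c d :: 'a
  assumes ab: "b + a = a" "a \<noteq> b" and cd: "d + c = c" "c \<noteq> d"
  shows "sim_normal (s_mul (a, b) (c, d)) = sim_normal (s_mul (a, 0) (c, d))"
proof -
  have bc_le: "b * c + a * c = a * c"
    using ab(1) by (rule add_eq_right_imp_mult)
  have ad_le: "a * d + a * c = a * c"
    using add_eq_right_imp_mult[OF cd(1)] by (simp add: mult.commute)
  have bd_le: "b * d + a * d = a * d"
    using ab(1) by (rule add_eq_right_imp_mult)
  show ?thesis
  proof (cases "a * c = 0")
    case True
    then have "a * d = 0" "b * c = 0" "b * d = 0"
      using bc_le ad_le bd_le by simp_all
    with True show ?thesis by (simp add: s_mul_def)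
  next
    case False
    have "b * c \<noteq> a * c"
      using mult_strict[of b a c] ab False by (auto simp: add.commute)
    moreover have "a * d \<noteq> a * c"
      using mult_strict[of d c a] cd False by (auto simp: add.commute mult.commute)
    ultimately have mixed_ne: "a * d + b * c \<noteq> a * c"
      using add_linear[of "a * d" "b * c"] by auto
    have mixed_le: "(a * d + b * c) + a * c = a * c"
      by (simp add: add.assoc bc_le ad_le)
    have "b * d + a * c = a * c"
      by (metis add.assoc ad_le bd_le)
    then have "s_mul (a, b) (c, d) = (a * c, a * d + b * c)"
      by (simp add: s_mul_def add.commute)
    moreover have "s_mul (a, 0) (c, d) = (a * c, a * d)"
      by (simp add: s_mul_def)
    ultimately show ?thesis
      using mixed_ne mixed_le ad_le \<open>a * d \<noteq> a * c\<close> by (simp add: sim_normal_pos_eq)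
  qed
qed

lemma sim_normal_mul_pos:
  fixes a b :: 'a
  assumes ab: "b + a = a" "a \<noteq> b"
  shows "sim_normal (s_mul (a, b) r) = sim_normal (s_mul (sim_normal (a, b)) r)"
proof -
  obtain c d where r: "r = (c, d)" by fastforce
  have "sim_normal (s_mul (a, b) (c, d)) = sim_normal (s_mul (a, 0) (c, d))"
  proof (cases "c = d")
    case True
    then show ?thesis
      using add_eq_right_imp_mult[OF ab(1), of d] by (simp add: s_mul_def add.commute)
  next
    case False
    then show ?thesis
    proof (cases rule: off_diagonal_cases)
      case 1
      show ?thesis by (rule sim_normal_mul_pos_pos[OF ab 1 False])
    next
      case 2
      with ab False have "sim_normal (s_mul (a, b) (d, c)) = sim_normal (s_mul (a, 0) (d, c))"
        by (intro sim_normal_mul_pos_pos) auto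
      then have "prod.swap (sim_normal (s_mul (a, b) (c, d))) = prod.swap (sim_normal (s_mul (a, 0) (c, d)))"
        by (simp add: s_mul_swap_right[symmetric] sim_normal_swap[symmetric])
      then show ?thesis by (simp add: inj_eq)
    qed
  qed
  then show ?thesis
    using r by (simp add: sim_normal_pos_eq[OF ab])
qed

lemma sim_normal_mul: "sim_normal (s_mul p r) = sim_normal (s_mul (sim_normal p) (r :: 'a \<times> 'a))"
proof -
  obtain a b where p: "p = (a, b)" by fastforce
  show ?thesis
  proof (cases "a = b")
    case False
    then show ?thesis
    proof (cases rule: off_diagonal_cases)
      case 1
      then show ?thesis using False p by (simp add: sim_normal_mul_pos)
    next
      case 2
      then have "sim_normal (s_mul (b, a) r) = sim_normal (s_mul (sim_normal (b, a)) r)"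
        using False by (intro sim_normal_mul_pos) auto
      then have "prod.swap (sim_normal (s_mul p r)) = prod.swap (sim_normal (s_mul (sim_normal p) r))"
        using p by (simp add: s_mul_swap_left[symmetric] sim_normal_swap[symmetric])
      then show ?thesis by (simp add: inj_eq)
    qed
  qed (simp add: p sim_normal_def)
qed

lemma summand_below:
  fixes a c d :: 'a
  assumes "c + d + a = a"
  shows "c + a = a"
proof -
  have "c + a = c + (c + d + a)"
    using assms by simp
  also have "\<dots> = (c + c) + d + a"
    by (simp only: add.assoc)
  finally show ?thesis
    using assms by (simp add: add_idem)
qed

lemma summands_below:
  fixes a c d :: 'a
  assumes "c + d + a = a"
  shows "c + a = a" "d + a = a"
proof -
  show "c + a = a"
    using assms by (rule summand_below)
  have "d + c + a = a"
    using assms by (simp add: add.commute)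
  then show "d + a = a"
    by (rule summand_below)
qed

lemma sim_normal_add_below_pos:
  fixes a b :: 'a
  assumes ab: "b + a = a" "a \<noteq> b" and r: "s_total r + a = a"
  shows "sim_normal (s_add (a, b) r) \<in> {sim_normal (a, b), (a, a)}"
proof -
  have sum: "s_add (a, b) r = (a, b + snd r)"
    using summands_below[OF r[unfolded s_total_def]] by (simp add: s_add_def add.commute)
  have "(b + snd r) + a = a"
    using ab(1) summands_below[OF r[unfolded s_total_def]] by (simp add: add.assoc)
  with sum show ?thesis
    by (cases "b + snd r = a") (simp_all add: sim_normal_def sim_normal_pos_eq ab)
qed

lemma sim_normal_add_below:
  assumes "s_total r + s_total p = s_total (p :: 'a \<times> 'a)"
  shows "sim_normal (s_add p r) \<in> {sim_normal p, (s_total p, s_total p)}"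
proof -
  obtain a b where p: "p = (a, b)" by fastforce
  show ?thesis
  proof (cases "a = b")
    case True
    then have "s_add p r = p"
      using p assms summands_below[of "fst r" "snd r" a]
      by (simp add: s_add_def s_total_def add_idem add.commute)
    then show ?thesis by simp
  next
    case False
    then show ?thesis
    proof (cases rule: off_diagonal_cases)
      case 1
      then have "a + b = a" by (simp add: add.commute)
      then show ?thesis
        using 1 False p assms sim_normal_add_below_pos[of b a r] by (simp add: s_total_def)
    next
      case 2
      then have "sim_normal (s_add (b, a) (prod.swap r)) \<in> {sim_normal (b, a), (b, b)}"
        using False p assms
        by (intro sim_normal_add_below_pos) (auto simp: s_total_def add.commute)
      then have "prod.swap (sim_normal (s_add p r)) \<in> prod.swap ` {sim_normal p, (b, b)}"
        using p by (simp add: s_add_swap[symmetric] sim_normal_swap[symmetric])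
      then show ?thesis
        using p 2 by (auto simp: s_total_def inj_eq prod.swap_def prod_eq_iff)
    qed
  qed
qed

lemma add_idem_antisym:
  fixes a b x y :: 'a
  assumes "b = a + x" "a = b + y"
  shows "a = b"
proof -
  have a_eq: "a = a + x + y"
    using assms by simp
  have "b = (a + x + y) + x"
    using assms(1) a_eq by (metis add.assoc add.commute)
  also have "\<dots> = a + x + y"
    by (metis add.assoc add.commute add_idem)
  finally show ?thesis
    using a_eq by simp
qed

lemma sim_rel_Image_eq_iff:
  "sim_rel `` {p} = sim_rel `` {q} \<longleftrightarrow> sim_normal p = sim_normal (q :: 'a \<times> 'a)"
proof -
  have "sim_rel `` {p} = {r. sim_normal r = sim_normal p}" for p :: "'a \<times> 'a"
    by (auto simp: sim_rel_iff_sim_normal)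
  then show ?thesis
    by auto
qed

lemma sim_rel_congruence: "s_congruence (sim_rel :: ('a \<times> 'a) rel)"
  unfolding s_congruence_def
proof (intro conjI allI impI)
  show "equiv UNIV (sim_rel :: ('a \<times> 'a) rel)"
    by (auto simp: equiv_def refl_on_def sym_def trans_def sim_rel_iff_sim_normal)
next
  fix p q p' q' :: "'a \<times> 'a"
  assume "(p, q) \<in> sim_rel \<and> (p', q') \<in> sim_rel"
  then have eq: "sim_normal p = sim_normal q" "sim_normal p' = sim_normal q'"
    by (simp_all add: sim_rel_iff_sim_normal)
  have "sim_normal (s_add p p') = sim_normal (s_add q p')"
    by (metis sim_normal_add eq(1))
  also have "\<dots> = sim_normal (s_add q q')"
    by (metis sim_normal_add eq(2) s_add_commute)
  finally show "(s_add p p', s_add q q') \<in> sim_rel"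
    by (simp add: sim_rel_iff_sim_normal)
  have "sim_normal (s_mul p p') = sim_normal (s_mul q p')"
    by (metis sim_normal_mul eq(1))
  also have "\<dots> = sim_normal (s_mul q q')"
    by (metis sim_normal_mul eq(2) s_mul_commute)
  finally show "(s_mul p p', s_mul q q') \<in> sim_rel"
    by (simp add: sim_rel_iff_sim_normal)
qed

lemma sim_rel_quot_upper_bound: "quot_upper_bound (sim_rel :: ('a \<times> 'a) rel)"
  unfolding quot_upper_bound_def quot_le_def sim_rel_Image_eq_iff
proof (intro allI impI)
  fix p q :: "'a \<times> 'a"
  assume "(\<exists>x. sim_normal (s_add p x) = sim_normal q) \<and> (\<exists>y. sim_normal (s_add q y) = sim_normal p)"
  then obtain x y where
    x: "sim_normal (s_add p x) = sim_normal q" and y: "sim_normal (s_add q y) = sim_normal p"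
    by blast
  have tq: "s_total q = s_total p + s_total x"
    by (metis x s_total_sim_normal s_total_s_add)
  have tp: "s_total p = s_total q + s_total y"
    by (metis y s_total_sim_normal s_total_s_add)
  have t: "s_total p = s_total q"
    using tq tp by (rule add_idem_antisym)
  then have "s_total x + s_total p = s_total p" "s_total y + s_total q = s_total q"
    using tq tp by (metis add.commute)+
  from this[THEN sim_normal_add_below] x y t
  have "sim_normal q \<in> {sim_normal p, (s_total p, s_total p)}"
    "sim_normal p \<in> {sim_normal q, (s_total p, s_total p)}"
    by simp_all
  then show "sim_normal p = sim_normal q"
    by auto
qed

end

theorem lemma6p3:
  fixes T :: "'a::{comm_semiring_0, comm_monoid_mult} itself"
  shows "(s_congruence (sim_rel :: ('a \<times> 'a) rel) \<and> quot_upper_bound (sim_rel :: ('a \<times> 'a) rel))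
     \<longleftrightarrow> (idempotent_add T \<and> intr_linear T \<and>
          (\<forall>a b x :: 'a. intr_less a b \<longrightarrow> a * x = 0 \<or> intr_less (a * x) (b * x)))"
  unfolding intr_conditions_iff
proof
  assume "s_congruence (sim_rel :: ('a \<times> 'a) rel) \<and> quot_upper_bound (sim_rel :: ('a \<times> 'a) rel)"
  then have congruence: "s_congruence (sim_rel :: ('a \<times> 'a) rel)" ..
  show "(\<forall>x::'a. x + x = x) \<and> (\<forall>a b::'a. a + b = a \<or> a + b = b) \<and>
      (\<forall>a b x::'a. a + b = b \<longrightarrow> a \<noteq> b \<longrightarrow> a * x = 0 \<or> a * x \<noteq> b * x)"
    using sim_congruence_add_idem[OF congruence] sim_congruence_add_linear[OF congruence]
      sim_congruence_mult_strict[OF congruence] by blast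
next
  assume "(\<forall>x::'a. x + x = x) \<and> (\<forall>a b::'a. a + b = a \<or> a + b = b) \<and>
      (\<forall>a b x::'a. a + b = b \<longrightarrow> a \<noteq> b \<longrightarrow> a * x = 0 \<or> a * x \<noteq> b * x)"
  then have "\<And>x::'a. x + x = x" "\<And>a b::'a. a + b = a \<or> a + b = b"
    "\<And>a b x::'a. a + b = b \<Longrightarrow> a \<noteq> b \<Longrightarrow> a * x = 0 \<or> a * x \<noteq> b * x"
    by blast+
  then show "s_congruence (sim_rel :: ('a \<times> 'a) rel) \<and> quot_upper_bound (sim_rel :: ('a \<times> 'a) rel)"
    using sim_rel_congruence sim_rel_quot_upper_bound by blast
qed

end
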